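(* Let $p,q$ be distinct odd primes with $p\equiv 1\pmod 4$, $q\equiv 3\pmod 4$, $\gcd(p-1,q-1)=2$, having a common primitive root $g$, and satisfying $|q-p|<\sqrt{pq}-1$. Let $s$ be the balanced Whiteman generalized cyclotomic sequence of period $N=pq$ defined in the context. Then its 2-adic complexity satisfies $\varphi_2(s)\ge pq-p-q-1$.
   Context: Let $N=pq$ and $e=(p-1)(q-1)/2$. Let $x$ be the unique element of $\mathbb{Z}_N$ with $x\equiv g\pmod p$ and $x\equiv 1\pmod q$. The Whiteman generalized cyclotomic classes of order 2 are $D_i=\{g^{s}x^{i}\bmod N: s=0,1,\dots,e-1\}$ for $i=0,1$; they partition $\mathbb{Z}_N^{*}$. For a prime $r\in\{p,q\}$, let $D_0^{(r)}=\{g^{2t}\bmod r: 0\le t\le \frac{r-1}{2}-1\}$ and $D_1^{(r)}=\{g^{2t+1}\bmod r: 0\le t\le \frac{r-1}{2}-1\}$. For $j=0,1$ let $D_j^{(p)}q=\{yq\bmod N: y\in D_j^{(p)}\}$ and $D_j^{(q)}p=\{yp\bmod N: y\in D_j^{(q)}\}$. Define $C_0=\{0\}\cup D_0\cup D_0^{(p)}q\cup D_0^{(q)}p$ and $C_1=D_1\cup D_1^{(p)}q\cup D_1^{(q)}p$, so $\mathbb{Z}_N=C_0\cup C_1$ (disjoint). The sequence $s=\{s_i\}$ of period $N$ is defined by $s_i=0$ if $i\bmod N\in C_0$ and $s_i=1$ if $i\bmod N\in C_1$. For a binary sequence $s$ of period $N$, let $S(2)=\sum_{i=0}^{N-1}s_i2^{i}$;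 its 2-adic complexity is $\varphi_2(s)=\left\lfloor \log_2\!\left(\frac{2^{N}-1}{\gcd(2^{N}-1,S(2))}+1\right)\right\rfloor$. *)

theory Defs
  imports "HOL-Analysis.Analysis" "HOL-Number_Theory.Number_Theory"
begin

definition wh_e :: "nat \<Rightarrow> nat \<Rightarrow> nat" where
  "wh_e p q = (p - 1) * (q - 1) div 2"

definition wh_x :: "nat \<Rightarrow> nat \<Rightarrow> nat \<Rightarrow> nat" where
  "wh_x p q g = (THE x. x < p * q \<and> [x = g] (mod p) \<and> [x = 1] (mod q))"

definition wh_D :: "nat \<Rightarrow> nat \<Rightarrow> nat \<Rightarrow> nat \<Rightarrow> nat set" where
  "wh_D p q g i = {(g ^ s * wh_x p q g ^ i) mod (p * q) | s. s < wh_e p q}"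

definition cyc_D :: "nat \<Rightarrow> nat \<Rightarrow> nat \<Rightarrow> nat set" where
  "cyc_D r g j = {g ^ (2 * t + j) mod r | t. t < (r - 1) div 2}"

definition wh_C0 :: "nat \<Rightarrow> nat \<Rightarrow> nat \<Rightarrow> nat set" where
  "wh_C0 p q g = {0} \<union> wh_D p q g 0 \<union> {(y * q) mod (p * q) | y. y \<in> cyc_D p g 0}
      \<union> {(y * p) mod (p * q) | y. y \<in> cyc_D q g 0}"

definition wh_C1 :: "nat \<Rightarrow> nat \<Rightarrow> nat \<Rightarrow> nat set" where
  "wh_C1 p q g = wh_D p q g 1 \<union> {(y * q) mod (p * q) | y. y \<in> cyc_D p g 1}
      \<union> {(y * p) mod (p * q) | y. y \<in> cyc_D q g 1}"

definition wh_seq :: "nat \<Rightarrow> nat \<Rightarrow> nat \<Rightarrow> nat \<Rightarrow> nat" where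
  "wh_seq p q g i = (if i mod (p * q) \<in> wh_C1 p q g then 1 else 0)"

definition two_adic_complexity :: "(nat \<Rightarrow> nat) \<Rightarrow> nat \<Rightarrow> int" where
  "two_adic_complexity s N =
     (let S = (\<Sum>i<N. s i * 2 ^ i) in
      \<lfloor>log 2 (real ((2 ^ N - 1) div gcd (2 ^ N - 1) S) + 1)\<rfloor>)"

end

theory Submission
  imports Defs
begin

(* We show that 2^N - 1 and S(2) are coprime, so the 2-adic complexity is the maximal value N.  Let r be a prime dividing 2^N - 1 and
   choose q', p' with q q' = 1 (mod p) and p p' = 1 (mod q).  By the Chinese remainder theorem
   2^i = u^(i mod p) w^(i mod q) (mod r) for u = 2^(q q') and w = 2^(p p'), and u^p = w^q = 1.
   Since p = 1 (mod 4), (p/q) = (q/p) =: e, and the Whiteman sequence satisfies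
   2 s_i = 1 - X_p(i) X_q(i), where X_P(i) = (i/P) if P does not divide i and X_P(i) = e otherwise.
   Hence
     2 S(2) = (sum of u^a) (sum of w^b) - (e + G_p(u)) (e + G_q(w))   (mod r)
   with quadratic Gauss sums G_P.  If r divided S(2), then r would divide e + G_p(u) with u <> 1
   or e + G_q(w) with w <> 1 (mod r).  As G_P(v)^2 = (-1/P) P for such roots of unity, this forces
   r | p - 1 resp. r | q + 1, contradicting p | r - 1 resp. q | r - 1, which holds because p
   resp. q divides the order of 2 modulo r. *)

lemma cong_small_int_imp_eq:
  fixes x y m :: int
  assumes "\<bar>x\<bar> \<le> 1" "\<bar>y\<bar> \<le> 1" "2 < m" "[x = y] (mod m)"
  shows "x = y"
proof (rule ccontr)
  assume "x \<noteq> y"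
  moreover have "m dvd x - y" using assms(4) by (simp add: cong_iff_dvd_diff)
  ultimately have "\<bar>m\<bar> \<le> \<bar>x - y\<bar>" by (intro dvd_imp_le_int) auto
  with assms(1-3) show False by linarith
qed

lemma cong_power_mod_exponent:
  fixes x m :: "'a::unique_euclidean_semiring"
  assumes "[x ^ n = 1] (mod m)"
  shows "[x ^ k = x ^ (k mod n)] (mod m)"
proof -
  have "x ^ k = x ^ (n * (k div n) + k mod n)" by simp
  also have "\<dots> = (x ^ n) ^ (k div n) * x ^ (k mod n)" by (simp only: power_add power_mult)
  also have "[\<dots> = 1 ^ (k div n) * x ^ (k mod n)] (mod m)"
    by (intro cong_mult cong_pow assms cong_refl)
  finally show ?thesis by simp
qed

lemma not_cong_one_power:
  fixes u r p k :: nat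
  assumes "prime p" "[u ^ p = 1] (mod r)" "\<not> [u = 1] (mod r)" "\<not> p dvd k"
  shows "\<not> [u ^ k = 1] (mod r)"
proof
  assume "[u ^ k = 1] (mod r)"
  hence "ord r u dvd k" by (simp add: ord_divides')
  moreover have "ord r u dvd p" using assms(2) by (simp add: ord_divides')
  hence "ord r u = 1 \<or> ord r u = p" using assms(1) by (simp add: prime_nat_iff)
  moreover have "ord r u \<noteq> 1" using assms(3) ord_eq_Suc_0_iff[of r u] by simp
  ultimately show False using assms(4) by auto
qed

lemma prime_dvd_pred_if_power_not_cong_one:
  fixes a r p m k :: nat
  assumes "prime r" "\<not> r dvd a" "prime p"
    and "[a ^ (p * m) = 1] (mod r)" "\<not> [a ^ (m * k) = 1] (mod r)"
  shows "p dvd r - 1"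
proof -
  have "ord r a dvd r - 1"
    using fermat_theorem[OF assms(1,2)] by (simp add: ord_divides')
  moreover have "p dvd ord r a"
  proof (rule ccontr)
    assume "\<not> p dvd ord r a"
    hence "coprime (ord r a) p" using assms(3) by (simp add: prime_imp_coprime coprime_commute)
    moreover have "ord r a dvd p * m" using assms(4) by (simp add: ord_divides')
    ultimately have "ord r a dvd m * k" by (simp add: coprime_dvd_mult_right_iff)
    with assms(5) show False by (simp add: ord_divides')
  qed
  ultimately show ?thesis by (rule dvd_trans[rotated])
qed

lemma sum_powers_cong_0:
  fixes u r n :: nat
  assumes "prime r" "[u ^ n = 1] (mod r)" "\<not> [u = 1] (mod r)"
  shows "[(\<Sum>a<n. int u ^ a) = 0] (mod int r)"
proof -
  have "int r dvd int u ^ n - 1"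
    using assms(2) by (simp add: cong_iff_dvd_diff flip: cong_int_iff)
  hence "int r dvd (int u - 1) * (\<Sum>a<n. int u ^ a)" by (simp add: power_diff_1_eq)
  moreover have "\<not> int r dvd int u - 1"
    using assms(3) by (simp add: cong_iff_dvd_diff flip: cong_int_iff)
  ultimately show ?thesis
    using assms(1) by (simp add: cong_0_iff prime_dvd_mult_iff)
qed

lemma sum_mod_mult_eq_double_sum:
  fixes P Q :: nat and f :: "nat \<Rightarrow> nat \<Rightarrow> 'a::comm_monoid_add"
  assumes "coprime P Q" "P > 0" "Q > 0"
  shows "(\<Sum>i<P * Q. f (i mod P) (i mod Q)) = (\<Sum>a<P. \<Sum>b<Q. f a b)"
proof -
  let ?h = "\<lambda>i. (i mod P, i mod Q)"
  have inj: "inj_on ?h {..<P * Q}"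
  proof
    fix i j assume ij: "i \<in> {..<P * Q}" "j \<in> {..<P * Q}" "?h i = ?h j"
    hence "[i = j] (mod P)" "[i = j] (mod Q)" by (auto simp: cong_def)
    hence "[i = j] (mod P * Q)" using assms(1) by (rule coprime_cong_mult_nat)
    thus "i = j" using ij cong_less_modulus_unique_nat by auto
  qed
  have "?h ` {..<P * Q} = {..<P} \<times> {..<Q}"
    using assms(2,3) card_image[OF inj]
    by (intro card_subset_eq) (auto simp: card_cartesian_product)
  hence "bij_betw ?h {..<P * Q} ({..<P} \<times> {..<Q})" using inj by (simp add: bij_betw_def)
  hence "(\<Sum>i<P * Q. case_prod f (?h i)) = (\<Sum>z\<in>{..<P} \<times> {..<Q}. case_prod f z)"
    by (rule sum.reindex_bij_betw)
  thus ?thesis by (simp add: sum.cartesian_product)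
qed

lemma power_cong_mod_crt:
  fixes x m :: int and p q p' q' i :: nat
  assumes "coprime p q" "[x ^ (p * q) = 1] (mod m)"
    and "[q * q' = 1] (mod p)" "[p * p' = 1] (mod q)"
  shows "[x ^ i = (x ^ (q * q')) ^ (i mod p) * (x ^ (p * p')) ^ (i mod q)] (mod m)"
proof -
  define E where "E = q * q' * (i mod p) + p * p' * (i mod q)"
  have "[E = 1 * (i mod p) + 0] (mod p)"
    unfolding E_def by (intro cong_add cong_mult assms(3) cong_refl) (simp add: cong_0_iff)
  hence "[E = i] (mod p)" by (simp add: cong_def)
  moreover have "[E = 0 + 1 * (i mod q)] (mod q)"
    unfolding E_def by (intro cong_add cong_mult assms(4) cong_refl) (simp add: cong_0_iff)
  hence "[E = i] (mod q)" by (simp add: cong_def)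
  ultimately have "E mod (p * q) = i mod (p * q)"
    using assms(1) by (simp add: coprime_cong_mult_nat flip: cong_def)
  have "[(x ^ (q * q')) ^ (i mod p) * (x ^ (p * p')) ^ (i mod q) = x ^ E] (mod m)"
    by (simp add: E_def power_add power_mult)
  also have "[x ^ E = x ^ (E mod (p * q))] (mod m)" by (rule cong_power_mod_exponent[OF assms(2)])
  also have "x ^ (E mod (p * q)) = x ^ (i mod (p * q))" using \<open>E mod (p * q) = i mod (p * q)\<close> by simp
  also have "[x ^ (i mod (p * q)) = x ^ i] (mod m)"
    using cong_power_mod_exponent[OF assms(2), of i] by (rule cong_sym)
  finally show ?thesis by (rule cong_sym)
qed

section \<open>The Legendre symbol\<close>

lemma abs_Legendre_le_1: "\<bar>Legendre a m\<bar> \<le> 1"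
  by (simp add: Legendre_def)

lemma Legendre_cong:
  assumes "[a = b] (mod m)"
  shows "Legendre a m = Legendre b m"
proof -
  have "[a = 0] (mod m) \<longleftrightarrow> [b = 0] (mod m)" "QuadRes m a \<longleftrightarrow> QuadRes m b"
    unfolding QuadRes_def using assms cong_sym cong_trans by blast+
  thus ?thesis by (simp add: Legendre_def)
qed

lemma Legendre_mod: "Legendre (a mod m) m = Legendre a m"
  by (rule Legendre_cong) (simp add: cong_def)

lemma Legendre_nat_cong: "[a = b] (mod p) \<Longrightarrow> Legendre (int a) (int p) = Legendre (int b) (int p)"
  by (rule Legendre_cong) (simp add: cong_int_iff)

lemma Legendre_eq_0_iff: "Legendre a m = 0 \<longleftrightarrow> m dvd a"
  by (simp add: Legendre_def cong_0_iff)

lemma Legendre_square: "\<not> m dvd a \<Longrightarrow> Legendre a m * Legendre a m = 1"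
  by (simp add: Legendre_def cong_0_iff)

lemma Legendre_prime_square:
  assumes "prime p" "prime q" "p \<noteq> q"
  shows "Legendre (int q) (int p) * Legendre (int q) (int p) = 1"
proof -
  have "\<not> p dvd q" using assms primes_dvd_imp_eq by blast
  thus ?thesis by (intro Legendre_square) simp
qed

lemma Legendre_one: "1 < m \<Longrightarrow> Legendre 1 m = 1"
  unfolding Legendre_def QuadRes_def
  by (auto simp: cong_0_iff intro: exI[of _ 1] zdvd_not_zless)

lemma Legendre_eq_if_cong:
  assumes "prime p" "2 < p" "[Legendre a p = c] (mod int p)" "\<bar>c\<bar> \<le> 1"
  shows "Legendre a p = c"
  using cong_small_int_imp_eq[OF abs_Legendre_le_1 assms(4) _ assms(3)] assms(2) by simp

lemma Legendre_mult:
  assumes "prime p" "2 < p"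
  shows "Legendre (a * b) (int p) = Legendre a (int p) * Legendre b (int p)"
proof (rule Legendre_eq_if_cong[OF assms])
  have "[Legendre (a * b) p = a ^ ((p - 1) div 2) * b ^ ((p - 1) div 2)] (mod p)"
    using euler_criterion[OF assms, of "a * b"] by (simp add: power_mult_distrib)
  also have "[a ^ ((p - 1) div 2) * b ^ ((p - 1) div 2) = Legendre a p * Legendre b p] (mod p)"
    using euler_criterion[OF assms, of a] euler_criterion[OF assms, of b]
    by (intro cong_mult) (simp_all add: cong_sym)
  finally show "[Legendre (a * b) p = Legendre a p * Legendre b p] (mod int p)" .
  show "\<bar>Legendre a p * Legendre b p\<bar> \<le> 1"
    using abs_Legendre_le_1[of a p] abs_Legendre_le_1[of b p] by (simp add: abs_mult mult_le_one)
qed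

lemma Legendre_power:
  assumes "prime p" "2 < p"
  shows "Legendre (a ^ k) (int p) = Legendre a (int p) ^ k"
  by (induction k) (use assms Legendre_one[of "int p"] Legendre_mult[OF assms] in auto)

lemma Legendre_minus_one:
  assumes "prime p" "2 < p"
  shows "Legendre (-1) (int p) = (-1) ^ ((p - 1) div 2)"
  by (rule Legendre_eq_if_cong[OF assms euler_criterion[OF assms]]) simp

lemma Legendre_primroot:
  assumes "prime p" "2 < p" "residue_primroot p g"
  shows "Legendre (int g) (int p) = -1"
proof (rule ccontr)
  have ord: "ord p g = p - 1" and "coprime p g"
    using assms by (auto simp: residue_primroot_def totient_prime)
  have "\<not> int p dvd int g"
  proof
    assume "int p dvd int g"
    with \<open>coprime p g\<close> have "p = 1" by (simp add: coprime_absorb_left)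
    with assms(2) show False by simp
  qed
  moreover assume "Legendre (int g) (int p) \<noteq> -1"
  ultimately have "Legendre (int g) (int p) = 1"
    using Legendre_square[of "int p" "int g"] by (auto simp: zmult_eq_1_iff)
  hence "[int g ^ ((p - 1) div 2) = int 1] (mod int p)"
    using euler_criterion[OF assms(1,2), of "int g"] by (simp add: cong_sym)
  hence "[g ^ ((p - 1) div 2) = 1] (mod p)" by (simp only: of_nat_power[symmetric] cong_int_iff)
  hence "p - 1 dvd (p - 1) div 2" using ord by (simp only: ord_divides)
  thus False using assms(2) by (auto dest: dvd_imp_le)
qed

lemma Legendre_primroot_power:
  assumes "prime p" "2 < p" "residue_primroot p g"
  shows "Legendre (int g ^ k) (int p) = (-1) ^ k"
  by (simp add: Legendre_power[OF assms(1,2)] Legendre_primroot[OF assms])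

lemma Legendre_swap_if_1_mod_4:
  assumes "prime p" "prime q" "2 < p" "2 < q" "p \<noteq> q" "[p = 1] (mod 4)"
  shows "Legendre (int p) (int q) = Legendre (int q) (int p)"
proof -
  have "even ((p - 1) div 2)" using assms(6) by (simp add: cong_def) presburger
  hence "Legendre p q * Legendre q p = 1" using Quadratic_Reciprocity[OF assms(1,3,2,4,5)] by simp
  thus ?thesis by (auto simp: zmult_eq_1_iff)
qed

lemma bij_betw_mult_mod_prime:
  fixes a p :: nat
  assumes "prime p" "coprime a p"
  shows "bij_betw (\<lambda>t. a * t mod p) {1..<p} {1..<p}"
proof -
  have inj: "inj_on (\<lambda>t. a * t mod p) {1..<p}"
  proof
    fix x y assume "x \<in> {1..<p}" "y \<in> {1..<p}" "a * x mod p = a * y mod p"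
    moreover from this have "[x = y] (mod p)"
      using assms(2) by (simp add: cong_mult_lcancel_nat flip: cong_def)
    ultimately show "x = y" by (simp add: cong_less_modulus_unique_nat)
  qed
  have "(\<lambda>t. a * t mod p) ` {1..<p} \<subseteq> {1..<p}"
  proof safe
    fix t assume t: "t \<in> {1..<p}"
    hence "\<not> p dvd t" by (auto dest: dvd_imp_le)
    moreover have "\<not> p dvd a"
    proof
      assume "p dvd a"
      with assms(2) have "is_unit p" by (simp add: coprime_absorb_right)
      with assms(1) show False by (simp add: not_prime_unit)
    qed
    ultimately have "\<not> p dvd a * t" using assms(1) by (simp add: prime_dvd_mult_iff)
    thus "a * t mod p \<in> {1..<p}" using assms(1) prime_gt_0_nat by (simp add: dvd_eq_mod_eq_0)
  qed
  thus ?thesis using inj endo_inj_surj[OF _ _ inj] by (simp add: bij_betw_def)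
qed

lemma sum_Legendre_eq_0:
  assumes "prime p" "2 < p"
  shows "(\<Sum>t\<in>{1..<p}. Legendre (int t) (int p)) = 0"
proof -
  \<comment> \<open>Multiplication by a primitive root, a non-residue, permutes the summands and flips their signs.\<close>
  obtain g where g: "residue_primroot p g"
    using prime_primitive_root_exists[of p] assms(1) prime_gt_1_nat by blast
  hence "coprime g p" by (simp add: residue_primroot_def coprime_commute)
  from sum.reindex_bij_betw[OF bij_betw_mult_mod_prime[OF assms(1) this], of "\<lambda>t. Legendre t p"]
  have "(\<Sum>t\<in>{1..<p}. Legendre t p) = (\<Sum>t\<in>{1..<p}. Legendre (g * t mod p) p)" by simp
  also have "\<dots> = - (\<Sum>t\<in>{1..<p}. Legendre t p)"
    using Legendre_primroot[OF assms g]
    by (simp add: of_nat_mod Legendre_mod Legendre_mult[OF assms] sum_negf)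
  finally show ?thesis by simp
qed

section \<open>Quadratic Gauss sums modulo a prime\<close>

definition gauss_sum :: "nat \<Rightarrow> int \<Rightarrow> int" where
  "gauss_sum p u = (\<Sum>a\<in>{1..<p}. Legendre (int a) (int p) * u ^ a)"

lemma gauss_sum_cong_0:
  assumes "prime p" "2 < p" "[u = 1] (mod m)"
  shows "[gauss_sum p u = 0] (mod m)"
proof -
  have "[gauss_sum p u = (\<Sum>a\<in>{1..<p}. Legendre (int a) (int p) * 1 ^ a)] (mod m)"
    unfolding gauss_sum_def by (intro cong_sum cong_mult cong_refl cong_pow assms(3))
  thus ?thesis using sum_Legendre_eq_0[OF assms(1,2)] by simp
qed

lemma gauss_sum_cong_reindex:
  assumes "prime p" "2 < p" "[u ^ p = 1] (mod m)" "a \<in> {1..<p}"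
  shows "[gauss_sum p u =
    Legendre (int a) (int p) * (\<Sum>t\<in>{1..<p}. Legendre (int t) (int p) * u ^ (a * t))] (mod m)"
proof -
  let ?L = "\<lambda>t. Legendre (int t) (int p)"
  have "\<not> p dvd a" using assms(4) by (auto dest: dvd_imp_le)
  with assms(1) have "coprime p a" by (rule prime_imp_coprime)
  hence "coprime a p" by (simp add: coprime_commute)
  from sum.reindex_bij_betw[OF bij_betw_mult_mod_prime[OF assms(1) this], of "\<lambda>b. ?L b * u ^ b"]
  have "gauss_sum p u = (\<Sum>t\<in>{1..<p}. ?L (a * t mod p) * u ^ (a * t mod p))"
    by (simp add: gauss_sum_def)
  also have "[\<dots> = (\<Sum>t\<in>{1..<p}. ?L a * (?L t * u ^ (a * t)))] (mod m)"
  proof (rule cong_sum)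
    fix t
    have "?L (a * t mod p) = ?L a * ?L t"
      by (simp add: of_nat_mod Legendre_mod Legendre_mult[OF assms(1,2)])
    thus "[?L (a * t mod p) * u ^ (a * t mod p) = ?L a * (?L t * u ^ (a * t))] (mod m)"
      using cong_power_mod_exponent[OF assms(3), of "a * t"]
      by (simp add: mult.assoc cong_scalar_left cong_sym)
  qed
  finally show ?thesis by (simp add: sum_distrib_left)
qed

lemma sum_powers_multiple_cong:
  fixes u r p t :: nat
  assumes "prime p" "prime r" "[u ^ p = 1] (mod r)" "\<not> [u = 1] (mod r)" "t \<in> {1..<p}"
  shows "[(\<Sum>a\<in>{1..<p}. int u ^ (a * (t + 1))) = (if t = p - 1 then int p - 1 else -1)] (mod int r)"
proof (cases "t = p - 1")
  case True
  have "[(\<Sum>a\<in>{1..<p}. int u ^ (a * (t + 1))) = (\<Sum>a\<in>{1..<p}. 1)] (mod int r)"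
  proof (rule cong_sum)
    fix a
    have "[(int u ^ p) ^ a = 1 ^ a] (mod int r)"
      using assms(3) by (intro cong_pow) (simp flip: cong_int_iff)
    thus "[int u ^ (a * (t + 1)) = 1] (mod int r)"
      using True assms(5) by (simp add: power_mult[symmetric] mult.commute)
  qed
  thus ?thesis using True assms(5) by (simp add: of_nat_diff)
next
  case False
  hence "\<not> p dvd t + 1" using assms(5) by (auto dest: dvd_imp_le)
  hence "\<not> [u ^ (t + 1) = 1] (mod r)" by (rule not_cong_one_power[OF assms(1,3,4)])
  moreover have "[(u ^ (t + 1)) ^ p = 1] (mod r)"
  proof -
    have "(u ^ (t + 1)) ^ p = (u ^ p) ^ (t + 1)" by (simp only: power_mult[symmetric] mult.commute)
    also have "[\<dots> = 1 ^ (t + 1)] (mod r)" by (rule cong_pow[OF assms(3)])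
    finally show ?thesis by simp
  qed
  ultimately have "[(\<Sum>a<p. int (u ^ (t + 1)) ^ a) = 0] (mod int r)"
    by (intro sum_powers_cong_0[OF assms(2)])
  moreover have "(\<Sum>a<p. int (u ^ (t + 1)) ^ a) = 1 + (\<Sum>a\<in>{1..<p}. int u ^ (a * (t + 1)))"
  proof -
    have "{..<p} = insert 0 {1..<p}" using assms(5) by auto
    hence "(\<Sum>a<p. int (u ^ (t + 1)) ^ a) = 1 + (\<Sum>a\<in>{1..<p}. int (u ^ (t + 1)) ^ a)" by simp
    also have "(\<Sum>a\<in>{1..<p}. int (u ^ (t + 1)) ^ a) = (\<Sum>a\<in>{1..<p}. int u ^ (a * (t + 1)))"
      by (intro sum.cong refl) (simp only: of_nat_power power_mult[symmetric] mult.commute)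
    finally show ?thesis .
  qed
  ultimately have "[1 + (\<Sum>a\<in>{1..<p}. int u ^ (a * (t + 1))) = 0] (mod int r)" by simp
  thus ?thesis using False by (simp add: cong_iff_dvd_diff add.commute)
qed

lemma gauss_sum_square_cong:
  fixes p r u :: nat
  assumes "prime p" "2 < p" "prime r" "[u ^ p = 1] (mod r)" "\<not> [u = 1] (mod r)"
  shows "[gauss_sum p u ^ 2 = Legendre (-1) (int p) * int p] (mod int r)"
proof -
  let ?L = "\<lambda>t. Legendre (int t) (int p)"
  let ?A = "{1..<p}"
  let ?T = "\<lambda>t. \<Sum>a\<in>?A. int u ^ (a * (t + 1))"
  let ?R = "\<lambda>a. \<Sum>t\<in>?A. ?L t * int u ^ (a * t)"
  define G where "G = gauss_sum p u"
  \<comment> \<open>Substituting b = a t in the second factor of G^2 leaves inner sums over a of u^(a(t+1)),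
    which vanish modulo r unless t = p - 1.\<close>
  have up: "[int u ^ p = 1] (mod int r)" using assms(4) by (simp flip: cong_int_iff)
  have "G ^ 2 = (\<Sum>a\<in>?A. ?L a * int u ^ a * G)"
    by (simp add: G_def gauss_sum_def power2_eq_square sum_distrib_right)
  also have "[(\<Sum>a\<in>?A. ?L a * int u ^ a * G) = (\<Sum>a\<in>?A. ?L a * int u ^ a * (?L a * ?R a))] (mod int r)"
  proof (rule cong_sum)
    fix a assume "a \<in> ?A"
    thus "[?L a * int u ^ a * G = ?L a * int u ^ a * (?L a * ?R a)] (mod int r)"
      unfolding G_def by (intro cong_scalar_left gauss_sum_cong_reindex[OF assms(1,2) up])
  qed
  also have "(\<Sum>a\<in>?A. ?L a * int u ^ a * (?L a * ?R a)) = (\<Sum>a\<in>?A. int u ^ a * ?R a)"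
  proof (rule sum.cong[OF refl])
    fix a assume "a \<in> ?A"
    hence "?L a * ?L a = 1" by (intro Legendre_square) (auto dest: zdvd_imp_le)
    moreover have "?L a * int u ^ a * (?L a * ?R a) = (?L a * ?L a) * (int u ^ a * ?R a)"
      by (simp add: algebra_simps)
    ultimately show "?L a * int u ^ a * (?L a * ?R a) = int u ^ a * ?R a" by simp
  qed
  also have "\<dots> = (\<Sum>a\<in>?A. \<Sum>t\<in>?A. ?L t * int u ^ (a * (t + 1)))"
    by (simp add: sum_distrib_left power_add algebra_simps)
  also have "\<dots> = (\<Sum>t\<in>?A. ?L t * ?T t)"
    by (subst sum.swap) (simp add: sum_distrib_left)
  also have "[(\<Sum>t\<in>?A. ?L t * ?T t) = (\<Sum>t\<in>?A. ?L t * (if t = p - 1 then int p - 1 else -1))] (mod int r)"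
    by (intro cong_sum cong_scalar_left sum_powers_multiple_cong[OF assms(1,3,4,5)])
  also have "(\<Sum>t\<in>?A. ?L t * (if t = p - 1 then int p - 1 else -1)) =
      (\<Sum>t\<in>?A. (if t = p - 1 then ?L t * int p else 0) - ?L t)"
    by (intro sum.cong refl) (simp add: algebra_simps)
  also have "\<dots> = ?L (p - 1) * int p"
    using assms(2) sum_Legendre_eq_0[OF assms(1,2)] by (simp add: sum_subtractf)
  also have "?L (p - 1) = Legendre (-1) (int p)"
    using assms(2) by (intro Legendre_cong) (simp add: of_nat_diff cong_iff_dvd_diff)
  finally show ?thesis unfolding G_def .
qed

lemma prime_dvd_unit_plus_gauss_sum:
  fixes p r u :: nat and e :: int
  assumes "prime p" "2 < p" "prime r" "[u ^ p = 1] (mod r)" "e * e = 1"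
    and "int r dvd e + gauss_sum p u"
  shows "\<not> [u = 1] (mod r)" and "[Legendre (-1) (int p) * int p = 1] (mod int r)"
proof -
  have G: "[gauss_sum p u = - e] (mod int r)"
    using assms(6) by (simp add: cong_iff_dvd_diff add.commute)
  show u: "\<not> [u = 1] (mod r)"
  proof
    assume "[u = 1] (mod r)"
    hence "[int u = 1] (mod int r)" by (simp flip: cong_int_iff)
    hence "[gauss_sum p u = 0] (mod int r)" by (rule gauss_sum_cong_0[OF assms(1,2)])
    with G have "[- e = 0] (mod int r)" by (rule cong_trans[OF cong_sym])
    hence "int r dvd e * e" by (simp add: cong_0_iff)
    with assms(3,5) show False by (simp add: prime_gt_1_nat)
  qed
  have "[gauss_sum p u ^ 2 = 1] (mod int r)"
    using cong_pow[OF G, of 2] assms(5) by (simp add: power2_eq_square)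
  with gauss_sum_square_cong[OF assms(1-4) u]
  show "[Legendre (-1) (int p) * int p = 1] (mod int r)" by (rule cong_trans[OF cong_sym])
qed

section \<open>The Whiteman sequence in terms of Legendre symbols\<close>

lemma wh_x_cong:
  assumes "prime p" "prime q" "p \<noteq> q"
  shows "wh_x p q g < p * q" "[wh_x p q g = g] (mod p)" "[wh_x p q g = 1] (mod q)"
proof -
  have "\<exists>!x. x < p * q \<and> [x = g] (mod p) \<and> [x = 1] (mod q)"
    using assms by (intro binary_chinese_remainder_unique_nat) (auto simp: primes_coprime)
  from theI'[OF this] show "wh_x p q g < p * q" "[wh_x p q g = g] (mod p)" "[wh_x p q g = 1] (mod q)"
    unfolding wh_x_def by auto
qed

lemma residue_primroot_power_surj:
  assumes "prime p" "residue_primroot p g" "\<not> p dvd y"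
  obtains k where "k < p - 1" "g ^ k mod p = y mod p"
proof -
  have p: "1 < p" using assms(1) prime_gt_1_nat by simp
  have "coprime p y" using assms(1,3) by (rule prime_imp_coprime)
  hence "coprime y p" by (simp add: coprime_commute)
  moreover have "y mod p \<noteq> 0" using assms(3) by (simp add: dvd_eq_mod_eq_0)
  ultimately have "y mod p \<in> totatives p" using p by (simp add: totatives_def)
  hence "y mod p \<in> (\<lambda>i. g ^ i mod p) ` {..<totient p}"
    using residue_primroot_is_generator[OF p assms(2)] by (simp add: bij_betw_def)
  thus thesis using that totient_prime[OF assms(1)] by force
qed

lemma cyc_D_1_eq:
  assumes "prime p" "2 < p" "residue_primroot p g"
  shows "cyc_D p g 1 = {y. 0 < y \<and> y < p \<and> Legendre (int y) (int p) = -1}"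
proof (intro equalityI subsetI)
  fix y assume "y \<in> cyc_D p g 1"
  then obtain t where y: "y = g ^ (2 * t + 1) mod p" unfolding cyc_D_def by auto
  hence L: "Legendre (int y) (int p) = -1"
    using Legendre_primroot_power[OF assms, of "2 * t + 1"] by (simp add: of_nat_mod Legendre_mod)
  moreover have "y \<noteq> 0"
  proof
    assume "y = 0"
    with L show False by (simp add: Legendre_def)
  qed
  ultimately show "y \<in> {y. 0 < y \<and> y < p \<and> Legendre (int y) (int p) = -1}"
    using assms(2) y by simp
next
  fix y assume y: "y \<in> {y. 0 < y \<and> y < p \<and> Legendre (int y) (int p) = -1}"
  hence "\<not> p dvd y" by (auto dest: dvd_imp_le)
  then obtain k where k: "k < p - 1" "g ^ k mod p = y mod p"
    by (rule residue_primroot_power_surj[OF assms(1,3)])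
  hence "Legendre (int g ^ k) (int p) = -1"
    using y Legendre_nat_cong[of "g ^ k" y p] by (simp add: cong_def)
  hence "(-1::int) ^ k = -1" by (simp add: Legendre_primroot_power[OF assms])
  hence "odd k" by (metis neg_one_even_power one_neq_neg_one)
  then obtain t where "k = 2 * t + 1" by (rule oddE)
  with k y show "y \<in> cyc_D p g 1" unfolding cyc_D_def by auto
qed

lemma mem_cyc_D_1_times_iff:
  assumes "prime p" "prime q" "p \<noteq> q" "2 < p" "residue_primroot p g" "i < p * q"
  shows "i \<in> {y * q mod (p * q) | y. y \<in> cyc_D p g 1} \<longleftrightarrow>
    q dvd i \<and> \<not> p dvd i \<and> Legendre (int i) (int p) * Legendre (int q) (int p) = -1"
proof -
  have Lq: "Legendre (int q) (int p) * Legendre (int q) (int p) = 1"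
    using assms(1-3) by (rule Legendre_prime_square)
  have L: "Legendre (int y * int q) (int p) = Legendre (int y) (int p) * Legendre (int q) (int p)" for y
    using Legendre_mult[OF assms(1,4)] by simp
  have "i \<in> {y * q mod (p * q) | y. y \<in> cyc_D p g 1} \<longleftrightarrow>
      (\<exists>y. i = y * q \<and> 0 < y \<and> y < p \<and> Legendre (int y) (int p) = -1)"
    unfolding cyc_D_1_eq[OF assms(1,4,5)] by auto (metis mod_less)
  also have "\<dots> \<longleftrightarrow> q dvd i \<and> \<not> p dvd i \<and> Legendre (int i) (int p) * Legendre (int q) (int p) = -1"
  proof
    assume "\<exists>y. i = y * q \<and> 0 < y \<and> y < p \<and> Legendre (int y) (int p) = -1"
    then obtain y where y: "i = y * q" "Legendre (int y) (int p) = -1" by blast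
    hence Li: "Legendre (int i) (int p) = - Legendre (int q) (int p)" using L by simp
    with Lq have "\<not> p dvd i" using Legendre_eq_0_iff[of "int i" "int p"] by auto
    with Li Lq y(1) show "q dvd i \<and> \<not> p dvd i \<and> Legendre (int i) (int p) * Legendre (int q) (int p) = -1"
      by simp
  next
    assume "q dvd i \<and> \<not> p dvd i \<and> Legendre (int i) (int p) * Legendre (int q) (int p) = -1"
    moreover from this obtain y where "i = y * q" by (metis dvdE mult.commute)
    ultimately show "\<exists>y. i = y * q \<and> 0 < y \<and> y < p \<and> Legendre (int y) (int p) = -1"
      using assms(6) L[of y] Lq by (cases "y = 0") (auto simp: mult.assoc)
  qed
  finally show ?thesis .
qed

lemma exists_exponent_cong_double:
  fixes a b k1 k2 :: nat
  assumes "coprime a b" "0 < a" "0 < b" "even (k1 + k2)"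
  obtains s where "s < 2 * a * b" "[s = k1] (mod 2 * a)" "[s = k2] (mod 2 * b)"
proof -
  have par: "k1 mod 2 = k2 mod 2" using assms(4) by presburger
  obtain t where t: "[t = k1 div 2] (mod a)" "[t = k2 div 2] (mod b)"
    using binary_chinese_remainder_nat[OF assms(1)] by blast
  define s where "s = (2 * t + k1 mod 2) mod (2 * a * b)"
  have sa: "[s = 2 * t + k1 mod 2] (mod 2 * a)" and sb: "[s = 2 * t + k1 mod 2] (mod 2 * b)"
    by (simp_all add: s_def cong_def mod_mod_cancel)
  have "[2 * t + k1 mod 2 = 2 * (k1 div 2) + k1 mod 2] (mod 2 * a)"
    using t(1) by (intro cong_add cong_refl) (simp add: cong_def mod_mult_mult1)
  hence ta: "[2 * t + k1 mod 2 = k1] (mod 2 * a)" by simp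
  have "[2 * t + k1 mod 2 = 2 * (k2 div 2) + k2 mod 2] (mod 2 * b)"
    using t(2) par by (intro cong_add) (simp_all add: cong_def mod_mult_mult1)
  hence tb: "[2 * t + k1 mod 2 = k2] (mod 2 * b)" by simp
  have "s < 2 * a * b" using assms(2,3) by (simp add: s_def)
  thus thesis by (rule that[OF _ cong_trans[OF sa ta] cong_trans[OF sb tb]])
qed

lemma wh_D_1_element_cong:
  assumes "prime p" "prime q" "p \<noteq> q"
  shows "[g ^ s * wh_x p q g mod (p * q) = g ^ Suc s] (mod p)"
    and "[g ^ s * wh_x p q g mod (p * q) = g ^ s] (mod q)"
  using cong_scalar_left[OF wh_x_cong(2)[OF assms], of "g ^ s"]
    cong_scalar_left[OF wh_x_cong(3)[OF assms], of "g ^ s"]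
  by (simp_all add: cong_def mod_mod_cancel mult.commute)

lemma mem_wh_D_1_imp_Legendre:
  assumes "prime p" "2 < p" "prime q" "2 < q" "p \<noteq> q"
    and "residue_primroot p g" "residue_primroot q g" "i \<in> wh_D p q g 1"
  shows "\<not> p dvd i \<and> \<not> q dvd i \<and> Legendre (int i) (int p) * Legendre (int i) (int q) = -1"
proof -
  obtain s where i: "i = g ^ s * wh_x p q g mod (p * q)"
    using assms(8) unfolding wh_D_def by auto
  have "Legendre (int i) (int p) = (-1) ^ Suc s"
    using Legendre_nat_cong[OF wh_D_1_element_cong(1)[OF assms(1,3,5)]] i
    by (simp add: Legendre_primroot_power[OF assms(1,2,6)] del: power_Suc)
  moreover have "Legendre (int i) (int q) = (-1) ^ s"
    using Legendre_nat_cong[OF wh_D_1_element_cong(2)[OF assms(1,3,5)]] i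
    by (simp add: Legendre_primroot_power[OF assms(3,4,7)])
  ultimately show ?thesis
    using Legendre_eq_0_iff[of "int i" "int p"] Legendre_eq_0_iff[of "int i" "int q"]
    by (cases "even s") auto
qed

lemma exists_wh_exponent:
  assumes p: "prime p" "2 < p" and q: "prime q" "2 < q" and gcd: "gcd (p - 1) (q - 1) = 2"
    and gp: "residue_primroot p g" and gq: "residue_primroot q g" and odd: "odd (k1 + k2)"
  obtains s where "s < wh_e p q" "[g ^ Suc s = g ^ k1] (mod p)" "[g ^ s = g ^ k2] (mod q)"
proof -
  define a b where "a = (p - 1) div 2" and "b = (q - 1) div 2"
  have "odd p" "odd q" using p q by (simp_all add: prime_odd_nat)
  hence ab: "p - 1 = 2 * a" "q - 1 = 2 * b" by (simp_all add: a_def b_def)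
  have "2 * gcd a b = 2 * 1" using gcd unfolding ab gcd_mult_distrib_nat[symmetric] by simp
  hence "coprime a b" unfolding coprime_iff_gcd_eq_1 by simp
  moreover have "0 < a" "0 < b" using ab p(2) q(2) by auto
  moreover have "even (k1 + (2 * a - 1) + k2)"
  proof -
    have "k1 + (2 * a - 1) + k2 = (k1 + k2) + 2 * (a - 1) + 1" using \<open>0 < a\<close> by simp
    thus ?thesis using odd by simp
  qed
  ultimately obtain s where s: "s < 2 * a * b" "[s = k1 + (2 * a - 1)] (mod 2 * a)" "[s = k2] (mod 2 * b)"
    by (rule exists_exponent_cong_double)
  have ord: "ord p g = 2 * a" "ord q g = 2 * b" "coprime p g" "coprime q g"
    using gp gq ab by (simp_all add: residue_primroot_def totient_prime p(1) q(1))
  have "[s + 1 = k1 + (2 * a - 1) + 1] (mod 2 * a)" using s(2) by (rule cong_add) (rule cong_refl)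
  hence "[Suc s = k1] (mod 2 * a)" using \<open>0 < a\<close> by (simp add: cong_def)
  hence "[g ^ Suc s = g ^ k1] (mod p)" by (simp only: order_divides_expdiff[OF ord(3)] ord(1))
  moreover have "[g ^ s = g ^ k2] (mod q)"
    using s(3) by (simp only: order_divides_expdiff[OF ord(4)] ord(2))
  moreover have "s < wh_e p q" using s(1) ab by (simp add: wh_e_def)
  ultimately show thesis using that by blast
qed

lemma mem_wh_D_1_iff:
  assumes p: "prime p" "2 < p" and q: "prime q" "2 < q" and pq: "p \<noteq> q"
    and gcd: "gcd (p - 1) (q - 1) = 2"
    and gp: "residue_primroot p g" and gq: "residue_primroot q g" and i: "i < p * q"
  shows "i \<in> wh_D p q g 1 \<longleftrightarrow>
    \<not> p dvd i \<and> \<not> q dvd i \<and> Legendre (int i) (int p) * Legendre (int i) (int q) = -1"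
proof
  assume h: "\<not> p dvd i \<and> \<not> q dvd i \<and> Legendre (int i) (int p) * Legendre (int i) (int q) = -1"
  obtain k1 where k1: "g ^ k1 mod p = i mod p"
    using h by (auto intro: residue_primroot_power_surj[OF p(1) gp, of i])
  obtain k2 where k2: "g ^ k2 mod q = i mod q"
    using h by (auto intro: residue_primroot_power_surj[OF q(1) gq, of i])
  have "Legendre (int i) (int p) = (-1) ^ k1" "Legendre (int i) (int q) = (-1) ^ k2"
    using Legendre_nat_cong[of "g ^ k1" i p] Legendre_nat_cong[of "g ^ k2" i q] k1 k2
    by (simp_all add: cong_def Legendre_primroot_power[OF p gp] Legendre_primroot_power[OF q gq])
  hence "(-1::int) ^ (k1 + k2) = -1" using h by (simp add: power_add)
  hence "odd (k1 + k2)" by (metis neg_one_even_power one_neq_neg_one)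
  then obtain s where s: "s < wh_e p q" "[g ^ Suc s = g ^ k1] (mod p)" "[g ^ s = g ^ k2] (mod q)"
    by (rule exists_wh_exponent[OF p q gcd gp gq])
  have "[g ^ s * wh_x p q g mod (p * q) = i] (mod p)"
    using wh_D_1_element_cong(1)[OF p(1) q(1) pq, of g s] s(2) k1 by (simp add: cong_def)
  moreover have "[g ^ s * wh_x p q g mod (p * q) = i] (mod q)"
    using wh_D_1_element_cong(2)[OF p(1) q(1) pq, of g s] s(3) k2 by (simp add: cong_def)
  ultimately have "[g ^ s * wh_x p q g mod (p * q) = i] (mod p * q)"
    by (rule coprime_cong_mult_nat) (use p(1) q(1) pq in \<open>simp add: primes_coprime\<close>)
  hence "g ^ s * wh_x p q g mod (p * q) = i"
    by (rule cong_less_modulus_unique_nat) (use i p(1) q(1) in \<open>auto simp: prime_gt_0_nat\<close>)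
  thus "i \<in> wh_D p q g 1" using s(1) unfolding wh_D_def by auto
qed (rule mem_wh_D_1_imp_Legendre[OF p q pq gp gq])

text \<open>The function X_P of the proof idea: the Legendre symbol with value e at 0.\<close>
definition ext_Legendre :: "nat \<Rightarrow> int \<Rightarrow> nat \<Rightarrow> int" where
  "ext_Legendre p e a = (if a = 0 then e else Legendre (int a) (int p))"

lemma ext_Legendre_mod:
  "ext_Legendre p e (i mod p) = (if p dvd i then e else Legendre (int i) (int p))"
  by (simp add: ext_Legendre_def dvd_eq_mod_eq_0 of_nat_mod Legendre_mod)

lemma mem_wh_C1_iff:
  assumes p: "prime p" "2 < p" and q: "prime q" "2 < q" and pq: "p \<noteq> q"
    and gcd: "gcd (p - 1) (q - 1) = 2"
    and gp: "residue_primroot p g" and gq: "residue_primroot q g"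
    and eps: "Legendre (int p) (int q) = Legendre (int q) (int p)"
    and i: "i < p * q"
  shows "i \<in> wh_C1 p q g \<longleftrightarrow>
    (\<not> p dvd i \<and> \<not> q dvd i \<and> Legendre (int i) (int p) * Legendre (int i) (int q) = -1) \<or>
    (q dvd i \<and> \<not> p dvd i \<and> Legendre (int i) (int p) * Legendre (int q) (int p) = -1) \<or>
    (p dvd i \<and> \<not> q dvd i \<and> Legendre (int i) (int q) * Legendre (int q) (int p) = -1)"
proof -
  have "i \<in> {y * p mod (q * p) | y. y \<in> cyc_D q g 1} \<longleftrightarrow>
      p dvd i \<and> \<not> q dvd i \<and> Legendre (int i) (int q) * Legendre (int p) (int q) = -1"
    using i by (intro mem_cyc_D_1_times_iff[OF q(1) p(1) pq[symmetric] q(2) gq]) (simp add: mult.commute)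
  thus ?thesis
    unfolding wh_C1_def Un_iff mem_wh_D_1_iff[OF p q pq gcd gp gq i]
      mem_cyc_D_1_times_iff[OF p(1) q(1) pq p(2) gp i]
    by (simp add: mult.commute eps)
qed

lemma wh_seq_eq:
  assumes p: "prime p" "2 < p" and q: "prime q" "2 < q" and pq: "p \<noteq> q"
    and gcd: "gcd (p - 1) (q - 1) = 2"
    and gp: "residue_primroot p g" and gq: "residue_primroot q g"
    and eps: "Legendre (int p) (int q) = Legendre (int q) (int p)"
    and i: "i < p * q"
  shows "2 * int (wh_seq p q g i) = 1 -
    ext_Legendre p (Legendre (int q) (int p)) (i mod p) * ext_Legendre q (Legendre (int q) (int p)) (i mod q)"
proof -
  define e where "e = Legendre (int q) (int p)"
  have e: "e = 1 \<or> e = -1"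
    using Legendre_prime_square[OF p(1) q(1) pq] by (simp add: e_def zmult_eq_1_iff)
  have unit: "Legendre (int i) (int P) = 1 \<or> Legendre (int i) (int P) = -1" if "\<not> P dvd i" for P
    using Legendre_square[of "int P" "int i"] that by (auto simp: zmult_eq_1_iff)
  show ?thesis
    using mem_wh_C1_iff[OF p q pq gcd gp gq eps i] e unit[of p] unit[of q] i
    unfolding wh_seq_def e_def[symmetric] ext_Legendre_mod
    by (cases "p dvd i"; cases "q dvd i") auto
qed

lemma ext_Legendre_power_sum:
  assumes "0 < p"
  shows "(\<Sum>a<p. ext_Legendre p e a * u ^ a) = e + gauss_sum p u"
proof -
  have "{..<p} = insert 0 {1..<p}" using assms by auto
  thus ?thesis by (simp add: ext_Legendre_def gauss_sum_def)
qed

lemma wh_sum_cong: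
  assumes p: "prime p" "2 < p" and q: "prime q" "2 < q" and pq: "p \<noteq> q"
    and gcd: "gcd (p - 1) (q - 1) = 2"
    and gp: "residue_primroot p g" and gq: "residue_primroot q g"
    and eps: "Legendre (int p) (int q) = Legendre (int q) (int p)"
    and two: "[(2::int) ^ (p * q) = 1] (mod m)"
    and inv: "[q * q' = 1] (mod p)" "[p * p' = 1] (mod q)"
  shows "[2 * int (\<Sum>i<p * q. wh_seq p q g i * 2 ^ i) =
    (\<Sum>a<p. (2 ^ (q * q')) ^ a) * (\<Sum>b<q. (2 ^ (p * p')) ^ b) -
    (Legendre (int q) (int p) + gauss_sum p (2 ^ (q * q'))) *
    (Legendre (int q) (int p) + gauss_sum q (2 ^ (p * p')))] (mod m)"
proof -
  define e where "e = Legendre (int q) (int p)"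
  define U W :: int where "U = 2 ^ (q * q')" and "W = 2 ^ (p * p')"
  define F where "F a b = (1 - ext_Legendre p e a * ext_Legendre q e b) * (U ^ a * W ^ b)" for a b
  have cop: "coprime p q" using p(1) q(1) pq by (simp add: primes_coprime)
  have "2 * int (\<Sum>i<p * q. wh_seq p q g i * 2 ^ i) = (\<Sum>i<p * q. 2 * int (wh_seq p q g i) * 2 ^ i)"
    by (simp add: sum_distrib_left mult.assoc)
  also have "\<dots> = (\<Sum>i<p * q. (1 - ext_Legendre p e (i mod p) * ext_Legendre q e (i mod q)) * 2 ^ i)"
    by (intro sum.cong refl) (simp add: wh_seq_eq[OF p q pq gcd gp gq eps] e_def)
  also have "[(\<Sum>i<p * q. (1 - ext_Legendre p e (i mod p) * ext_Legendre q e (i mod q)) * 2 ^ i) =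
      (\<Sum>i<p * q. F (i mod p) (i mod q))] (mod m)"
    unfolding F_def U_def W_def
    by (intro cong_sum cong_mult cong_refl power_cong_mod_crt[OF cop two inv])
  also have "(\<Sum>i<p * q. F (i mod p) (i mod q)) = (\<Sum>a<p. \<Sum>b<q. F a b)"
    using cop p(1) q(1) by (intro sum_mod_mult_eq_double_sum) (auto simp: prime_gt_0_nat)
  also have "\<dots> = (\<Sum>a<p. U ^ a) * (\<Sum>b<q. W ^ b) -
      (\<Sum>a<p. ext_Legendre p e a * U ^ a) * (\<Sum>b<q. ext_Legendre q e b * W ^ b)"
    unfolding F_def sum_product by (simp add: sum_subtractf[symmetric] algebra_simps)
  finally show ?thesis
    using p(1) q(1) by (simp add: ext_Legendre_power_sum prime_gt_0_nat e_def U_def W_def)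
qed

section \<open>Coprimality of 2^N - 1 and S(2)\<close>

lemma odd_if_dvd_Mersenne:
  fixes r n :: nat
  assumes "r dvd 2 ^ n - 1" "0 < n"
  shows "odd r"
proof
  assume "even r"
  hence "even (2 ^ n - 1 :: nat)" using assms(1) by (rule dvd_trans)
  with assms(2) show False by simp
qed

lemma not_dvd_unit_plus_gauss_sum_1_mod_4:
  fixes p r m k :: nat and e :: int
  assumes p: "prime p" "[p = 1] (mod 4)" and r: "prime r" "odd r"
    and two: "[2 ^ (p * m) = 1] (mod r)" and e: "e * e = 1"
  shows "\<not> int r dvd e + gauss_sum p (2 ^ (m * k))"
proof
  assume "int r dvd e + gauss_sum p (2 ^ (m * k))"
  hence dvd: "int r dvd e + gauss_sum p (int (2 ^ (m * k)))" by simp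
  have "2 < p" using prime_ge_2_nat[OF p(1)] p(2) by (cases "p = 2") (auto simp: cong_def)
  have "\<not> r dvd 2" using r primes_dvd_imp_eq[OF r(1) two_is_prime_nat] by auto
  have "(2 ^ (m * k)) ^ p = ((2::nat) ^ (p * m)) ^ k" by (simp only: power_mult[symmetric] ac_simps)
  hence "[(2 ^ (m * k)) ^ p = 1] (mod r)" using cong_pow[OF two, of k] by simp
  from prime_dvd_unit_plus_gauss_sum[OF p(1) \<open>2 < p\<close> r(1) this e dvd]
  have "\<not> [2 ^ (m * k) = 1] (mod r)" and "[Legendre (-1) (int p) * int p = 1] (mod int r)" .
  moreover have "even ((p - 1) div 2)" using p(2) by (simp add: cong_def) presburger
  hence "Legendre (-1) (int p) = 1" by (simp add: Legendre_minus_one[OF p(1) \<open>2 < p\<close>])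
  ultimately have "[p = 1] (mod r)" and "p dvd r - 1"
    using prime_dvd_pred_if_power_not_cong_one[OF r(1) \<open>\<not> r dvd 2\<close> p(1) two]
    by (simp_all flip: cong_int_iff)
  hence "r dvd p - 1" "p dvd r - 1" using \<open>2 < p\<close> by (simp_all add: cong_altdef_nat)
  thus False using \<open>2 < p\<close> prime_gt_1_nat[OF r(1)] by (auto dest!: dvd_imp_le)
qed

lemma not_dvd_unit_plus_gauss_sum_3_mod_4:
  fixes q r m k :: nat and e :: int
  assumes q: "prime q" "[q = 3] (mod 4)" and r: "prime r" "odd r"
    and two: "[2 ^ (q * m) = 1] (mod r)" and e: "e * e = 1"
  shows "\<not> int r dvd e + gauss_sum q (2 ^ (m * k))"
proof
  assume "int r dvd e + gauss_sum q (2 ^ (m * k))"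
  hence dvd: "int r dvd e + gauss_sum q (int (2 ^ (m * k)))" by simp
  have "2 < q" using prime_ge_2_nat[OF q(1)] q(2) by (cases "q = 2") (auto simp: cong_def)
  have "\<not> r dvd 2" using r primes_dvd_imp_eq[OF r(1) two_is_prime_nat] by auto
  have "(2 ^ (m * k)) ^ q = ((2::nat) ^ (q * m)) ^ k" by (simp only: power_mult[symmetric] ac_simps)
  hence "[(2 ^ (m * k)) ^ q = 1] (mod r)" using cong_pow[OF two, of k] by simp
  from prime_dvd_unit_plus_gauss_sum[OF q(1) \<open>2 < q\<close> r(1) this e dvd]
  have "\<not> [2 ^ (m * k) = 1] (mod r)" and "[Legendre (-1) (int q) * int q = 1] (mod int r)" .
  moreover have "odd ((q - 1) div 2)" using q(2) by (simp add: cong_def) presburger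
  hence "Legendre (-1) (int q) = -1" by (simp add: Legendre_minus_one[OF q(1) \<open>2 < q\<close>])
  ultimately have "[- int q = 1] (mod int r)" and "q dvd r - 1"
    using prime_dvd_pred_if_power_not_cong_one[OF r(1) \<open>\<not> r dvd 2\<close> q(1) two] by simp_all
  hence "int r dvd - (int q + 1)" "q dvd r - 1" by (simp_all add: cong_iff_dvd_diff)
  hence "r dvd q + 1" "q dvd r - 1"
    by (simp_all only: dvd_minus_iff) (metis int_dvd_int_iff of_nat_1 of_nat_add)
  hence "r = q + 1" using prime_gt_1_nat[OF r(1)] by (auto dest!: dvd_imp_le)
  with r(2) q(1) \<open>2 < q\<close> show False by (simp add: prime_odd_nat)
qed

lemma prime_dvd_factor_if_sum_powers_cong:
  fixes u w r p q :: nat and A B :: int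
  assumes "prime r" "[u ^ p = 1] (mod r)" "[w ^ q = 1] (mod r)"
    and "\<not> [u = 1] (mod r) \<or> \<not> [w = 1] (mod r)"
    and "[(\<Sum>a<p. int u ^ a) * (\<Sum>b<q. int w ^ b) = A * B] (mod int r)"
  shows "int r dvd A \<or> int r dvd B"
proof -
  have "[(\<Sum>a<p. int u ^ a) * (\<Sum>b<q. int w ^ b) = 0] (mod int r)"
    using assms(4) sum_powers_cong_0[OF assms(1,2)] sum_powers_cong_0[OF assms(1,3)]
    by (auto simp: cong_0_iff)
  with assms(5) have "[A * B = 0] (mod int r)" by (rule cong_trans[OF cong_sym])
  thus ?thesis using assms(1) by (simp add: cong_0_iff prime_dvd_mult_iff)
qed

lemma prime_dvd_Mersenne_not_dvd_wh_sum:
  assumes p: "prime p" "2 < p" and q: "prime q" "2 < q" and pq: "p \<noteq> q"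
    and p4: "[p = 1] (mod 4)" and q4: "[q = 3] (mod 4)" and gcd: "gcd (p - 1) (q - 1) = 2"
    and gp: "residue_primroot p g" and gq: "residue_primroot q g"
    and r: "prime r" "r dvd 2 ^ (p * q) - 1"
  shows "\<not> r dvd (\<Sum>i<p * q. wh_seq p q g i * 2 ^ i)"
proof
  assume rS: "r dvd (\<Sum>i<p * q. wh_seq p q g i * 2 ^ i)"
  have "odd r" by (rule odd_if_dvd_Mersenne[OF r(2)]) (use p(2) q(2) in simp)
  have two: "[2 ^ (p * q) = 1] (mod r)" using r(2) by (simp add: cong_altdef_nat)
  hence two_int: "[(2::int) ^ (p * q) = 1] (mod int r)" by (simp flip: cong_int_iff)
  obtain q' where inv_q: "[q * q' = 1] (mod p)"
    using cong_solve_coprime_nat[of q p] p(1) q(1) pq by (auto simp: primes_coprime)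
  obtain p' where inv_p: "[p * p' = 1] (mod q)"
    using cong_solve_coprime_nat[of p q] p(1) q(1) pq by (auto simp: primes_coprime)
  define u w :: nat where "u = 2 ^ (q * q')" and "w = 2 ^ (p * p')"
  have uw: "(2::int) ^ (q * q') = int u" "(2::int) ^ (p * p') = int w" by (simp_all add: u_def w_def)
  define e where "e = Legendre (int q) (int p)"
  have ee: "e * e = 1" unfolding e_def using p(1) q(1) pq by (rule Legendre_prime_square)
  have "[2 * int (\<Sum>i<p * q. wh_seq p q g i * 2 ^ i) =
      (\<Sum>a<p. int u ^ a) * (\<Sum>b<q. int w ^ b) - (e + gauss_sum p u) * (e + gauss_sum q w)] (mod int r)"
    using wh_sum_cong[OF p q pq gcd gp gq Legendre_swap_if_1_mod_4[OF p(1) q(1) p(2) q(2) pq p4]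
        two_int inv_q inv_p]
    unfolding uw e_def[symmetric] .
  moreover have "[2 * int (\<Sum>i<p * q. wh_seq p q g i * 2 ^ i) = 0] (mod int r)"
    unfolding cong_0_iff using rS by (intro dvd_mult) (simp only: int_dvd_int_iff)
  ultimately have "[(\<Sum>a<p. int u ^ a) * (\<Sum>b<q. int w ^ b) -
      (e + gauss_sum p u) * (e + gauss_sum q w) = 0] (mod int r)"
    by (rule cong_trans[OF cong_sym])
  hence main: "[(\<Sum>a<p. int u ^ a) * (\<Sum>b<q. int w ^ b) = (e + gauss_sum p u) * (e + gauss_sum q w)] (mod int r)"
    by (simp only: cong_iff_dvd_diff diff_0_right)
  have "[u ^ p = 1] (mod r)" "[w ^ q = 1] (mod r)"
    using cong_pow[OF two, of q'] cong_pow[OF two, of p']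
    by (simp_all add: u_def w_def power_mult[symmetric] ac_simps)
  hence "int r dvd e + gauss_sum p u \<or> int r dvd e + gauss_sum q w"
  proof (rule prime_dvd_factor_if_sum_powers_cong[OF r(1) _ _ _ main])
    show "\<not> [u = 1] (mod r) \<or> \<not> [w = 1] (mod r)"
    proof (rule ccontr)
      assume "\<not> (\<not> [u = 1] (mod r) \<or> \<not> [w = 1] (mod r))"
      hence uw1: "[int u * int w = 1 * 1] (mod int r)" by (intro cong_mult) (simp_all flip: cong_int_iff)
      have "[(2::int) = int u * int w] (mod int r)"
        using power_cong_mod_crt[OF _ two_int inv_q inv_p, of 1] p(1) q(1) pq p(2) q(2)
        by (simp add: uw primes_coprime)
      from cong_trans[OF this uw1] have "int r dvd 1" by (simp add: cong_iff_dvd_diff)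
      with r(1) show False by (simp add: prime_gt_1_nat)
    qed
  qed
  moreover have "[2 ^ (q * p) = 1] (mod r)" using two by (simp add: mult.commute)
  ultimately show False
    using not_dvd_unit_plus_gauss_sum_1_mod_4[OF p(1) p4 r(1) \<open>odd r\<close> two ee, of q']
      not_dvd_unit_plus_gauss_sum_3_mod_4[OF q(1) q4 r(1) \<open>odd r\<close> _ ee, of p p']
    unfolding uw by blast
qed

lemma coprime_Mersenne_wh_sum:
  assumes "prime p" "2 < p" "prime q" "2 < q" "p \<noteq> q"
    and "[p = 1] (mod 4)" "[q = 3] (mod 4)" "gcd (p - 1) (q - 1) = 2"
    and "residue_primroot p g" "residue_primroot q g"
  shows "coprime (2 ^ (p * q) - 1) (\<Sum>i<p * q. wh_seq p q g i * 2 ^ i)"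
proof (rule coprimeI)
  fix c assume c: "c dvd 2 ^ (p * q) - 1" "c dvd (\<Sum>i<p * q. wh_seq p q g i * 2 ^ i)"
  show "is_unit c"
  proof (rule ccontr)
    assume "\<not> is_unit c"
    then obtain r where r: "prime r" "r dvd c" using prime_factor_nat[of c] by auto
    show False
      using prime_dvd_Mersenne_not_dvd_wh_sum[OF assms r(1) dvd_trans[OF r(2) c(1)]]
        dvd_trans[OF r(2) c(2)] by contradiction
  qed
qed

lemma two_adic_complexity_eq_period:
  assumes "coprime (2 ^ N - 1) (\<Sum>i<N. s i * 2 ^ i)"
  shows "two_adic_complexity s N = int N"
proof -
  define S where "S = (\<Sum>i<N. s i * 2 ^ i)"
  have "gcd (2 ^ N - 1) S = 1" using assms unfolding S_def coprime_iff_gcd_eq_1 .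
  hence "real ((2 ^ N - 1) div gcd (2 ^ N - 1) S) + 1 = 2 ^ N" by (simp add: of_nat_diff)
  hence "two_adic_complexity s N = \<lfloor>log 2 ((2::real) ^ N)\<rfloor>"
    unfolding two_adic_complexity_def Let_def S_def[symmetric] by (simp only:)
  also have "\<dots> = int N" by (simp add: log_pow_cancel)
  finally show ?thesis .
qed

theorem theorem1:
  fixes p q g :: nat
  assumes "prime p" and "prime q" and "p \<noteq> q" and "odd p" and "odd q"
    and "[p = 1] (mod 4)" and "[q = 3] (mod 4)"
    and "gcd (p - 1) (q - 1) = 2"
    and "residue_primroot p g" and "residue_primroot q g"
    and "\<bar>real q - real p\<bar> < sqrt (real (p * q)) - 1"
  shows "two_adic_complexity (wh_seq p q g) (p * q) \<ge> int (p * q) - int p - int q - 1"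
proof -
  have "2 < p" using prime_ge_2_nat[OF assms(1)] assms(4) by (cases "p = 2") auto
  moreover have "2 < q" using prime_ge_2_nat[OF assms(2)] assms(5) by (cases "q = 2") auto
  ultimately
  have "two_adic_complexity (wh_seq p q g) (p * q) = int (p * q)"
    using assms(1-3,6-10) by (intro two_adic_complexity_eq_period coprime_Mersenne_wh_sum)
  thus ?thesis by simp
qed

end
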